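(* Let $\theta=(k_r)$ be a lacunary sequence, $m\ge0$ an integer, $p>0$ and $0<\beta\le1$. If $\limsup_r\frac{k_r}{k_{r-1}^\beta}<\infty$, then $N_\theta(p,F,\Delta^m)\subseteq w_p^\beta(F,\Delta^m)$.
   Context: A fuzzy number is a map $X:\mathbb{R}\to[0,1]$ which is normal, fuzzy convex, upper semicontinuous, with compact closure of $\{t:X(t)>0\}$; $L(\mathbb{R})$ is the set of fuzzy numbers. Level sets $[X]^\alpha=\{t:X(t)\ge\alpha\}$ ($\alpha\in(0,1]$), $[X]^0=\overline{\{t:X(t)>0\}}$, are compact intervals $[u^\alpha,v^\alpha]$. Subtraction: $[X-Y]^\alpha=[u_1^\alpha-v_2^\alpha,v_1^\alpha-u_2^\alpha]$. Metric: $d(X,Y)=\sup_{\alpha\in[0,1]}\max\{|u_1^\alpha-u_2^\alpha|,|v_1^\alpha-v_2^\alpha|\}$. $(\Delta^0X)_k=X_k$, $(\Delta^1X)_k=X_k-X_{k+1}$, $(\Delta^mX)_k=(\Delta^1(\Delta^{m-1}X))_k$. A lacunary sequence is an increasing integer sequence $\theta=(k_r)_{r\ge0}$ with $k_0=0$, $h_r=k_r-k_{r-1}\to\infty$; $I_r=(k_{r-1},k_r]$. $N_\theta(p,F,\Delta^m)$: sequences $X$ of fuzzy numbers with some $X_0\in L(\mathbb{R})$ such that $\lim_r\frac{1}{h_r}\sum_{k\in I_r}d(\Delta^mX_k,X_0)^p=0$. $w_p^\beta(F,\Delta^m)$: sequences $X$ with some $X_0\in L(\mathbb{R})$ such that $\lim_{n\to\infty}\frac{1}{n^\beta}\sum_{k=1}^n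 d(\Delta^mX_k,X_0)^p=0$. *)

theory Defs
  imports "HOL-Analysis.Analysis"
begin

type_synonym fuzzy = "real \<Rightarrow> real"

definition fuzzy_number :: "fuzzy \<Rightarrow> bool" where
  "fuzzy_number X \<longleftrightarrow>
     (\<forall>t. 0 \<le> X t \<and> X t \<le> 1) \<and>
     (\<exists>t. X t = 1) \<and>
     (\<forall>x y l. 0 \<le> l \<and> l \<le> 1 \<longrightarrow> X (l * x + (1 - l) * y) \<ge> min (X x) (X y)) \<and>
     (\<forall>t. \<forall>e>0. \<exists>d>0. \<forall>s. \<bar>s - t\<bar> < d \<longrightarrow> X s < X t + e) \<and>
     compact (closure {t. X t > 0})"

definition level :: "fuzzy \<Rightarrow> real \<Rightarrow> real set" where
  "level X a = (if a = 0 then closure {t. X t > 0} else {t. X t \<ge> a})"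

definition lower :: "fuzzy \<Rightarrow> real \<Rightarrow> real" where
  "lower X a = Inf (level X a)"

definition upper :: "fuzzy \<Rightarrow> real \<Rightarrow> real" where
  "upper X a = Sup (level X a)"

text \<open>Subtraction, defined as the fuzzy number whose level sets are
  [lower X a - upper Y a, upper X a - lower Y a].\<close>
definition fsub :: "fuzzy \<Rightarrow> fuzzy \<Rightarrow> fuzzy" where
  "fsub X Y z = Sup ({0} \<union> {a. 0 < a \<and> a \<le> 1 \<and>
       lower X a - upper Y a \<le> z \<and> z \<le> upper X a - lower Y a})"

definition fdist :: "fuzzy \<Rightarrow> fuzzy \<Rightarrow> real" where
  "fdist X Y = (SUP a\<in>{0..1}. max \<bar>lower X a - lower Y a\<bar> \<bar>upper X a - upper Y a\<bar>)"

fun fdelta :: "nat \<Rightarrow> (nat \<Rightarrow> fuzzy) \<Rightarrow> nat \<Rightarrow> fuzzy" where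
  "fdelta 0 X k = X k"
| "fdelta (Suc m) X k = fsub (fdelta m X k) (fdelta m X (Suc k))"

definition lacunary :: "(nat \<Rightarrow> nat) \<Rightarrow> bool" where
  "lacunary \<theta> \<longleftrightarrow> strict_mono \<theta> \<and> \<theta> 0 = 0 \<and>
     filterlim (\<lambda>r. \<theta> (Suc r) - \<theta> r) at_top sequentially"

text \<open>Sequences are indexed by k \<ge> 1 (index 0 is unused).\<close>
definition N_theta :: "(nat \<Rightarrow> nat) \<Rightarrow> real \<Rightarrow> nat \<Rightarrow> (nat \<Rightarrow> fuzzy) set" where
  "N_theta \<theta> p m = {X. (\<forall>k\<ge>1. fuzzy_number (X k)) \<and>
     (\<exists>X0. fuzzy_number X0 \<and>
       (\<lambda>r. (1 / real (\<theta> (Suc r) - \<theta> r)) *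
             (\<Sum>k\<in>{\<theta> r<..\<theta> (Suc r)}. fdist (fdelta m X k) X0 powr p))
       \<longlonglongrightarrow> 0)}"

definition w_beta :: "real \<Rightarrow> real \<Rightarrow> nat \<Rightarrow> (nat \<Rightarrow> fuzzy) set" where
  "w_beta p \<beta> m = {X. (\<forall>k\<ge>1. fuzzy_number (X k)) \<and>
     (\<exists>X0. fuzzy_number X0 \<and>
       (\<lambda>n. (1 / real n powr \<beta>) *
             (\<Sum>k=1..n. fdist (fdelta m X k) X0 powr p))
       \<longlonglongrightarrow> 0)}"

end

theory Submission
  imports Defs
begin

text \<open>Only the distances \<open>a k = d(\<Delta>\<^sup>m X\<^sub>k, X\<^sub>0)\<^sup>p \<ge> 0\<close> matter, so the inclusion is a statement
  about nonnegative real sequences. If the block averages over \<open>I\<^sub>r\<close> are eventually below \<open>\<epsilon>\<close>,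
  then the partial sums satisfy \<open>S(k\<^sub>r) \<le> K + \<epsilon> k\<^sub>r\<close>. For \<open>k\<^sub>r < n \<le> k\<^sub>r\<^sub>+\<^sub>1\<close> monotonicity of
  \<open>S\<close> gives \<open>S(n)/n\<^sup>\<beta> \<le> K/k\<^sub>r\<^sup>\<beta> + \<epsilon> k\<^sub>r\<^sub>+\<^sub>1/k\<^sub>r\<^sup>\<beta>\<close>, and the hypothesis on the limsup keeps the
  last quotient bounded.\<close>

lemma strict_mono_bracket:
  fixes \<theta> :: "nat \<Rightarrow> nat"
  assumes "strict_mono \<theta>" and "\<theta> R < n"
  shows "\<exists>r\<ge>R. \<theta> r < n \<and> n \<le> \<theta> (Suc r)"
proof -
  define s where "s = (LEAST s. n \<le> \<theta> s)"
  have s: "n \<le> \<theta> s"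
    unfolding s_def by (rule LeastI[of _ n]) (rule seq_suble[OF assms(1)])
  have "R < s"
  proof (rule ccontr)
    assume "\<not> R < s"
    then have "\<theta> s \<le> \<theta> R"
      using strict_mono_less_eq[OF assms(1)] by simp
    with s assms(2) show False by simp
  qed
  then obtain r where r: "s = Suc r" "R \<le> r" by (cases s) auto
  have "\<not> n \<le> \<theta> r"
    using not_less_Least[of r "\<lambda>s. n \<le> \<theta> s"] r by (simp add: s_def)
  with r s show ?thesis by auto
qed

lemma eventually_sequentially_from_blocks:
  fixes \<theta> :: "nat \<Rightarrow> nat"
  assumes "strict_mono \<theta>"
    and "eventually (\<lambda>r. \<forall>n\<in>{\<theta> r<..\<theta> (Suc r)}. P n) sequentially"
  shows "eventually P sequentially"
proof -
  obtain R where R: "\<And>r n. r \<ge> R \<Longrightarrow> n \<in> {\<theta> r<..\<theta> (Suc r)} \<Longrightarrow> P n"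
    using assms(2) unfolding eventually_sequentially by blast
  have "P n" if "n > \<theta> R" for n
    using strict_mono_bracket[OF assms(1) that] R by fastforce
  then show ?thesis
    unfolding eventually_sequentially by (metis Suc_le_eq)
qed

lemma sum_lacunary_partial_le:
  fixes a :: "nat \<Rightarrow> real" and \<theta> :: "nat \<Rightarrow> nat"
  assumes "strict_mono \<theta>"
    and block: "\<And>r. r \<ge> R \<Longrightarrow> (\<Sum>k\<in>{\<theta> r<..\<theta> (Suc r)}. a k) \<le> \<epsilon> * (real (\<theta> (Suc r)) - real (\<theta> r))"
    and "R \<le> r"
  shows "(\<Sum>k=1..\<theta> r. a k) \<le> (\<Sum>k=1..\<theta> R. a k) + \<epsilon> * (real (\<theta> r) - real (\<theta> R))"
  using \<open>R \<le> r\<close>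
proof (induction r rule: dec_induct)
  case base
  show ?case by simp
next
  case (step r)
  have "\<theta> r \<le> \<theta> (Suc r)"
    using strict_mono_less_eq[OF assms(1)] by simp
  then have "{1..\<theta> (Suc r)} = {1..\<theta> r} \<union> {\<theta> r<..\<theta> (Suc r)}"
    by auto
  then have "(\<Sum>k=1..\<theta> (Suc r). a k) = (\<Sum>k=1..\<theta> r. a k) + (\<Sum>k\<in>{\<theta> r<..\<theta> (Suc r)}. a k)"
    by (simp add: sum.union_disjoint ivl_disj_int)
  with step.IH block[OF step.hyps(1)] show ?case
    by (simp add: algebra_simps)
qed

lemma limsup_less_PInf_imp_eventually_le:
  fixes f :: "nat \<Rightarrow> real"
  assumes "limsup (\<lambda>r. ereal (f r)) < \<infinity>"
  obtains C :: real where "C > 0" and "eventually (\<lambda>r. f r \<le> C) sequentially"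
proof -
  obtain n :: nat where "limsup (\<lambda>r. ereal (f r)) < ereal (real n)"
    using assms less_PInf_Ex_of_nat by auto
  then have "eventually (\<lambda>r. ereal (f r) < ereal (real n)) sequentially"
    by (rule Limsup_lessD)
  then have "eventually (\<lambda>r. f r \<le> real (Suc n)) sequentially"
    by (rule eventually_mono) simp
  then show ?thesis
    by (rule that[rotated]) simp
qed

lemma eventually_block_sum_le:
  fixes a :: "nat \<Rightarrow> real" and \<theta> :: "nat \<Rightarrow> nat"
  assumes "strict_mono \<theta>" and "0 < \<epsilon>"
    and lim: "(\<lambda>r. (1 / real (\<theta> (Suc r) - \<theta> r)) * (\<Sum>k\<in>{\<theta> r<..\<theta> (Suc r)}. a k)) \<longlonglongrightarrow> 0"
  shows "eventually (\<lambda>r. (\<Sum>k\<in>{\<theta> r<..\<theta> (Suc r)}. a k)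
           \<le> \<epsilon> * (real (\<theta> (Suc r)) - real (\<theta> r))) sequentially"
  using order_tendstoD(2)[OF lim \<open>0 < \<epsilon>\<close>]
proof (rule eventually_mono)
  fix r
  have gap: "real (\<theta> r) < real (\<theta> (Suc r))"
    using strict_monoD[OF assms(1), of r "Suc r"] by simp
  then have len: "real (\<theta> (Suc r) - \<theta> r) = real (\<theta> (Suc r)) - real (\<theta> r)"
    by simp
  assume "(1 / real (\<theta> (Suc r) - \<theta> r)) * (\<Sum>k\<in>{\<theta> r<..\<theta> (Suc r)}. a k) < \<epsilon>"
  then show "(\<Sum>k\<in>{\<theta> r<..\<theta> (Suc r)}. a k) \<le> \<epsilon> * (real (\<theta> (Suc r)) - real (\<theta> r))"
    using gap unfolding len by (simp add: field_simps)
qed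

lemma beta_average_le_of_partial_sum_le:
  fixes a :: "nat \<Rightarrow> real"
  assumes nonneg: "\<And>k. 0 \<le> a k" and "0 < \<beta>" and "0 < m" and "m < n" and "n \<le> M"
    and bound: "(\<Sum>k=1..M. a k) \<le> K + \<epsilon> * real M"
  shows "(1 / real n powr \<beta>) * (\<Sum>k=1..n. a k) \<le> K / real m powr \<beta> + \<epsilon> * (real M / real m powr \<beta>)"
proof -
  have pos: "0 < real m powr \<beta>"
    using \<open>0 < m\<close> by simp
  have "0 \<le> (\<Sum>k=1..n. a k)" and "(\<Sum>k=1..n. a k) \<le> (\<Sum>k=1..M. a k)"
    using \<open>n \<le> M\<close> nonneg by (auto intro: sum_nonneg sum_mono2)
  have "real m powr \<beta> \<le> real n powr \<beta>"
    using \<open>m < n\<close> \<open>0 < \<beta>\<close> by (intro powr_mono2) auto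
  then have "(\<Sum>k=1..n. a k) / real n powr \<beta> \<le> (\<Sum>k=1..n. a k) / real m powr \<beta>"
    by (rule divide_left_mono[OF _ \<open>0 \<le> (\<Sum>k=1..n. a k)\<close>]) (use \<open>0 < m\<close> \<open>m < n\<close> in simp)
  then have "(1 / real n powr \<beta>) * (\<Sum>k=1..n. a k) \<le> (\<Sum>k=1..n. a k) / real m powr \<beta>"
    by simp
  also have "\<dots> \<le> (K + \<epsilon> * real M) / real m powr \<beta>"
    using \<open>(\<Sum>k=1..n. a k) \<le> (\<Sum>k=1..M. a k)\<close> bound pos by (simp add: divide_right_mono)
  also have "\<dots> = K / real m powr \<beta> + \<epsilon> * (real M / real m powr \<beta>)"
    by (simp add: add_divide_distrib)
  finally show ?thesis .
qed

lemma lacunary_average_imp_beta_average: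
  fixes a :: "nat \<Rightarrow> real" and \<theta> :: "nat \<Rightarrow> nat"
  assumes mono: "strict_mono \<theta>" and "\<theta> 0 = 0" and nonneg: "\<And>k. 0 \<le> a k"
    and "0 < \<beta>" and "0 < C"
    and lim: "(\<lambda>r. (1 / real (\<theta> (Suc r) - \<theta> r)) * (\<Sum>k\<in>{\<theta> r<..\<theta> (Suc r)}. a k)) \<longlonglongrightarrow> 0"
    and ratio: "eventually (\<lambda>r. real (\<theta> (Suc r)) / real (\<theta> r) powr \<beta> \<le> C) sequentially"
  shows "(\<lambda>n. (1 / real n powr \<beta>) * (\<Sum>k=1..n. a k)) \<longlonglongrightarrow> 0"
proof (rule order_tendstoI)
  fix e :: real
  assume "e < 0"
  then show "eventually (\<lambda>n. e < (1 / real n powr \<beta>) * (\<Sum>k=1..n. a k)) sequentially"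
    using nonneg by (intro always_eventually allI) (simp add: sum_nonneg order.strict_trans2)
next
  fix e :: real
  assume "0 < e"
  define \<epsilon> where "\<epsilon> = e / (2 * C)"
  have "\<epsilon> > 0" and "\<epsilon> * C = e / 2"
    using \<open>0 < e\<close> \<open>0 < C\<close> by (auto simp: \<epsilon>_def)
  obtain R where block: "\<And>r. r \<ge> R \<Longrightarrow>
      (\<Sum>k\<in>{\<theta> r<..\<theta> (Suc r)}. a k) \<le> \<epsilon> * (real (\<theta> (Suc r)) - real (\<theta> r))"
    using eventually_block_sum_le[OF mono \<open>\<epsilon> > 0\<close> lim] unfolding eventually_sequentially by blast
  define K where "K = (\<Sum>k=1..\<theta> R. a k)"
  have "filterlim (\<lambda>r. real (\<theta> r)) at_top sequentially"
    using filterlim_compose[OF filterlim_real_sequentially filterlim_subseq[OF mono]] by (simp add: o_def)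
  then have "(\<lambda>r. real (\<theta> r) powr (- \<beta>)) \<longlonglongrightarrow> 0"
    using tendsto_neg_powr[of "- \<beta>"] \<open>0 < \<beta>\<close> by simp
  then have "(\<lambda>r. K * real (\<theta> r) powr (- \<beta>)) \<longlonglongrightarrow> 0"
    by (rule tendsto_mult_right_zero)
  then have "eventually (\<lambda>r. K * real (\<theta> r) powr (- \<beta>) < e / 2) sequentially"
    by (rule order_tendstoD(2)) (use \<open>0 < e\<close> in simp)
  then have small: "eventually (\<lambda>r. K / real (\<theta> r) powr \<beta> < e / 2) sequentially"
    by (rule eventually_mono) (simp add: powr_minus_divide)
  have "eventually (\<lambda>r. \<forall>n\<in>{\<theta> r<..\<theta> (Suc r)}. (1 / real n powr \<beta>) * (\<Sum>k=1..n. a k) < e) sequentially"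
    using ratio small eventually_ge_at_top[of "max R 1"]
  proof eventually_elim
    case (elim r)
    have "0 < \<theta> r"
      using strict_monoD[OF mono, of 0 r] elim(3) \<open>\<theta> 0 = 0\<close> by simp
    have "(\<Sum>k=1..\<theta> (Suc r). a k) \<le> K + \<epsilon> * (real (\<theta> (Suc r)) - real (\<theta> R))"
      unfolding K_def using elim(3) by (intro sum_lacunary_partial_le[OF mono block]) auto
    also have "\<dots> \<le> K + \<epsilon> * real (\<theta> (Suc r))"
      using \<open>\<epsilon> > 0\<close> by simp
    finally have partial: "(\<Sum>k=1..\<theta> (Suc r). a k) \<le> K + \<epsilon> * real (\<theta> (Suc r))" .
    have "(1 / real n powr \<beta>) * (\<Sum>k=1..n. a k) < e" if "n \<in> {\<theta> r<..\<theta> (Suc r)}" for n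
    proof -
      have "(1 / real n powr \<beta>) * (\<Sum>k=1..n. a k)
          \<le> K / real (\<theta> r) powr \<beta> + \<epsilon> * (real (\<theta> (Suc r)) / real (\<theta> r) powr \<beta>)"
        using that by (intro beta_average_le_of_partial_sum_le[OF nonneg \<open>0 < \<beta>\<close> \<open>0 < \<theta> r\<close> _ _ partial]) auto
      also have "\<dots> < e / 2 + \<epsilon> * C"
        using elim(1,2) \<open>\<epsilon> > 0\<close> by (intro add_less_le_mono mult_left_mono) simp_all
      finally show ?thesis
        using \<open>\<epsilon> * C = e / 2\<close> by simp
    qed
    then show ?case ..
  qed
  then show "eventually (\<lambda>n. (1 / real n powr \<beta>) * (\<Sum>k=1..n. a k) < e) sequentially"
    by (rule eventually_sequentially_from_blocks[OF mono])
qed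

theorem theorem2p15:
  fixes \<theta> :: "nat \<Rightarrow> nat" and m :: nat and p \<beta> :: real
  assumes "lacunary \<theta>" and "p > 0" and "0 < \<beta>" and "\<beta> \<le> 1"
    and "limsup (\<lambda>r. ereal (real (\<theta> (Suc r)) / real (\<theta> r) powr \<beta>)) < \<infinity>"
  shows "N_theta \<theta> p m \<subseteq> w_beta p \<beta> m"
proof
  fix X
  assume "X \<in> N_theta \<theta> p m"
  then obtain X0 where fuzzy: "\<forall>k\<ge>1. fuzzy_number (X k)" "fuzzy_number X0"
    and lim: "(\<lambda>r. (1 / real (\<theta> (Suc r) - \<theta> r)) *
               (\<Sum>k\<in>{\<theta> r<..\<theta> (Suc r)}. fdist (fdelta m X k) X0 powr p)) \<longlonglongrightarrow> 0"
    unfolding N_theta_def by auto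
  obtain C where "C > 0" and ratio: "eventually (\<lambda>r. real (\<theta> (Suc r)) / real (\<theta> r) powr \<beta> \<le> C) sequentially"
    using limsup_less_PInf_imp_eventually_le[OF assms(5)] .
  have mono: "strict_mono \<theta>" and "\<theta> 0 = 0"
    using assms(1) unfolding lacunary_def by auto
  have "(\<lambda>n. (1 / real n powr \<beta>) * (\<Sum>k=1..n. fdist (fdelta m X k) X0 powr p)) \<longlonglongrightarrow> 0"
    by (rule lacunary_average_imp_beta_average[OF mono \<open>\<theta> 0 = 0\<close> _ assms(3) \<open>C > 0\<close> lim ratio])
      (rule powr_ge_zero)
  with fuzzy show "X \<in> w_beta p \<beta> m"
    unfolding w_beta_def by blast
qed

end
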